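(* Let $\epsilon>0$, $\delta\ge 0$, $n\ge1$, let $(\mathscr X,\mathscr B)$ be a measurable space, and let $\{\mu_i\}_{i\in I}$ be a set of exchangeable distributions on $\mathscr X^n$. Let $\phi:\mathscr X^n\to[0,1]$ be measurable and satisfy, for all $\underline X,\underline X'\in\mathscr X^n$ with $\delta(\underline X,\underline X')=1$, $$\phi_{\underline X}\le e^\epsilon\phi_{\underline X'}+\delta\quad\text{and}\quad 1-\phi_{\underline X}\le e^\epsilon(1-\phi_{\underline X'})+\delta. \qquad ( * )$$ Define $\phi':\mathscr X^n\to[0,1]$ by $\phi'_{\underline X}=\frac1{n!}\sum_{\pi\in\sigma(n)}\phi_{\pi(\underline X)}$, where $\sigma(n)$ is the symmetric group on $n$ letters acting by permuting coordinates. Then $\phi'$ satisfies $( * )$, $\int\phi'_{\underline X}\,d\mu_i=\int\phi_{\underline X}\,d\mu_i$ for all $i\in I$, and $\phi'$ depends on $\underline X$ only through its empirical distribution $\mathbb P_n$.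
   Context: The Hamming distance on $\mathscr X^n$ is $\delta(\underline X,\underline X')=\#\{i:X_i\ne X'_i\}$. A distribution on $\mathscr X^n$ is exchangeable if it is invariant under permutations of coordinates. The empirical distribution of $\underline X=(X_1,\dots,X_n)$ is $\mathbb P_n(B)=\frac1n\sum_{i=1}^n I_B(X_i)$ for measurable $B\subseteq\mathscr X$; it determines $\underline X$ up to permutation. *)

theory Defs
  imports "HOL-Probability.Probability"
begin

definition prod_space :: "'a measure \<Rightarrow> nat \<Rightarrow> (nat \<Rightarrow> 'a) measure" where
  "prod_space M n = PiM {..<n} (\<lambda>_. M)"

definition hamming :: "nat \<Rightarrow> (nat \<Rightarrow> 'a) \<Rightarrow> (nat \<Rightarrow> 'a) \<Rightarrow> nat" where
  "hamming n x y = card {i \<in> {..<n}. x i \<noteq> y i}"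

definition permute_coords :: "nat \<Rightarrow> (nat \<Rightarrow> nat) \<Rightarrow> (nat \<Rightarrow> 'a) \<Rightarrow> (nat \<Rightarrow> 'a)" where
  "permute_coords n \<pi> x = (\<lambda>j\<in>{..<n}. x (\<pi> j))"

definition exchangeable :: "'a measure \<Rightarrow> nat \<Rightarrow> (nat \<Rightarrow> 'a) measure \<Rightarrow> bool" where
  "exchangeable M n \<mu> \<longleftrightarrow> prob_space \<mu> \<and> sets \<mu> = sets (prod_space M n) \<and>
     (\<forall>\<pi>. \<pi> permutes {..<n} \<longrightarrow> distr \<mu> (prod_space M n) (permute_coords n \<pi>) = \<mu>)"

definition dp_test :: "'a measure \<Rightarrow> nat \<Rightarrow> real \<Rightarrow> real \<Rightarrow> ((nat \<Rightarrow> 'a) \<Rightarrow> real) \<Rightarrow> bool" where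
  "dp_test M n \<epsilon> \<delta> \<phi> \<longleftrightarrow>
     (\<forall>x\<in>space (prod_space M n). \<forall>x'\<in>space (prod_space M n). hamming n x x' = 1 \<longrightarrow>
        \<phi> x \<le> exp \<epsilon> * \<phi> x' + \<delta> \<and> 1 - \<phi> x \<le> exp \<epsilon> * (1 - \<phi> x') + \<delta>)"

definition symmetrize :: "nat \<Rightarrow> ((nat \<Rightarrow> 'a) \<Rightarrow> real) \<Rightarrow> (nat \<Rightarrow> 'a) \<Rightarrow> real" where
  "symmetrize n \<phi> x = (1 / fact n) * (\<Sum>\<pi>\<in>{\<pi>. \<pi> permutes {..<n}}. \<phi> (permute_coords n \<pi> x))"

definition empirical :: "nat \<Rightarrow> (nat \<Rightarrow> 'a) \<Rightarrow> 'a set \<Rightarrow> real" where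
  "empirical n x B = (1 / real n) * (\<Sum>i<n. indicator B (x i))"

end

theory Submission
  imports Defs "HOL-Combinatorics.Permutations"
begin

(* Permuting coordinates preserves the Hamming distance, so the two-sided (epsilon, delta)
   condition holds for every summand of phi' and survives averaging; exchangeability
   gives every summand the integral of phi.  Two samples with the same empirical
   distribution become, after a permutation, coordinatewise inseparable by measurable
   sets; no measurable function on X^n separates such points, and phi' is invariant
   under permutations. *)

lemma permute_coords_in_space:
  assumes "\<pi> permutes {..<n}" and "x \<in> space (prod_space M n)"
  shows "permute_coords n \<pi> x \<in> space (prod_space M n)"
  using assms permutes_in_image[OF assms(1)]
  by (auto simp: prod_space_def space_PiM permute_coords_def PiE_iff)

lemma measurable_permute_coords:
  assumes "\<pi> permutes {..<n}"
  shows "permute_coords n \<pi> \<in> measurable (prod_space M n) (prod_space M n)"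
  unfolding prod_space_def permute_coords_def
  by (rule measurable_restrict) (use permutes_in_image[OF assms] in auto)

lemma permute_coords_permute_coords:
  assumes "\<pi> permutes {..<n}"
  shows "permute_coords n \<pi> (permute_coords n p x) = permute_coords n (p \<circ> \<pi>) x"
proof -
  have "\<pi> j < n" if "j < n" for j using permutes_in_image[OF assms] that by simp
  then show ?thesis by (simp add: permute_coords_def fun_eq_iff)
qed

lemma hamming_permute_coords:
  assumes "\<pi> permutes {..<n}"
  shows "hamming n (permute_coords n \<pi> x) (permute_coords n \<pi> y) = hamming n x y"
proof -
  let ?D = "{i \<in> {..<n}. x (\<pi> i) \<noteq> y (\<pi> i)}"
  have "\<pi> ` ?D = {j \<in> \<pi> ` {..<n}. x j \<noteq> y j}" by auto
  also have "\<dots> = {j \<in> {..<n}. x j \<noteq> y j}" by (simp add: permutes_image[OF assms])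
  finally have "card ?D = hamming n x y"
    unfolding hamming_def using card_image[OF permutes_inj_on[OF assms], of ?D] by simp
  moreover have "{i \<in> {..<n}. permute_coords n \<pi> x i \<noteq> permute_coords n \<pi> y i} = ?D"
    by (auto simp: permute_coords_def)
  ultimately show ?thesis by (simp add: hamming_def)
qed

lemma card_permutations_lessThan: "card {\<pi>. \<pi> permutes {..<n}} = fact n"
  using card_permutations[of "{..<n}" n] by simp

lemma symmetrize_mono:
  assumes "\<And>\<pi>. \<pi> permutes {..<n} \<Longrightarrow> f (permute_coords n \<pi> x) \<le> g (permute_coords n \<pi> y)"
  shows "symmetrize n f x \<le> symmetrize n g y"
  unfolding symmetrize_def using assms by (intro mult_left_mono sum_mono) auto

lemma symmetrize_affine: "symmetrize n (\<lambda>z. a * f z + b) x = a * symmetrize n f x + b"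
  by (simp add: symmetrize_def sum.distrib sum_distrib_left card_permutations_lessThan
      field_simps)

lemma symmetrize_const: "symmetrize n (\<lambda>_. c) x = c"
  using symmetrize_affine[of n 0 "\<lambda>_. 0" c x] by simp

lemma symmetrize_one_minus: "symmetrize n (\<lambda>z. 1 - f z) x = 1 - symmetrize n f x"
  using symmetrize_affine[of n "-1" f 1 x] by simp

lemma measurable_symmetrize:
  assumes "\<phi> \<in> borel_measurable (prod_space M n)"
  shows "symmetrize n \<phi> \<in> borel_measurable (prod_space M n)"
  unfolding symmetrize_def[abs_def]
  by (intro borel_measurable_times borel_measurable_const borel_measurable_sum
      measurable_compose[OF measurable_permute_coords assms]) simp

lemma symmetrize_permute_coords:
  assumes "p permutes {..<n}"
  shows "symmetrize n \<phi> (permute_coords n p x) = symmetrize n \<phi> x"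
proof -
  have "(\<Sum>\<pi>\<in>{\<pi>. \<pi> permutes {..<n}}. \<phi> (permute_coords n \<pi> (permute_coords n p x)))
      = (\<Sum>\<pi>\<in>{\<pi>. \<pi> permutes {..<n}}. \<phi> (permute_coords n (p \<circ> \<pi>) x))"
    by (intro sum.cong) (simp_all add: permute_coords_permute_coords)
  also have "\<dots> = (\<Sum>\<pi>\<in>{\<pi>. \<pi> permutes {..<n}}. \<phi> (permute_coords n \<pi> x))"
    by (rule setum_permutations_compose_left[OF assms, symmetric])
  finally show ?thesis by (simp add: symmetrize_def)
qed

lemma symmetrize_bounds:
  assumes "\<And>z. z \<in> space (prod_space M n) \<Longrightarrow> a \<le> \<phi> z \<and> \<phi> z \<le> b"
    and "x \<in> space (prod_space M n)"
  shows "a \<le> symmetrize n \<phi> x \<and> symmetrize n \<phi> x \<le> b"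
proof -
  have "a \<le> \<phi> (permute_coords n \<pi> x) \<and> \<phi> (permute_coords n \<pi> x) \<le> b" if "\<pi> permutes {..<n}" for \<pi>
    using assms(1) permute_coords_in_space[OF that assms(2)] by blast
  then have "symmetrize n (\<lambda>_. a) x \<le> symmetrize n \<phi> x" "symmetrize n \<phi> x \<le> symmetrize n (\<lambda>_. b) x"
    by (auto intro: symmetrize_mono)
  then show ?thesis by (simp add: symmetrize_const)
qed

lemma dp_test_symmetrize:
  assumes "dp_test M n \<epsilon> \<delta> \<phi>"
  shows "dp_test M n \<epsilon> \<delta> (symmetrize n \<phi>)"
  unfolding dp_test_def
proof (intro ballI impI)
  fix x x' assume x: "x \<in> space (prod_space M n)" and x': "x' \<in> space (prod_space M n)"
    and "hamming n x x' = 1"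
  then have "\<phi> (permute_coords n \<pi> x) \<le> exp \<epsilon> * \<phi> (permute_coords n \<pi> x') + \<delta>
      \<and> 1 - \<phi> (permute_coords n \<pi> x) \<le> exp \<epsilon> * (1 - \<phi> (permute_coords n \<pi> x')) + \<delta>"
    if "\<pi> permutes {..<n}" for \<pi>
    using assms permute_coords_in_space[OF that] hamming_permute_coords[OF that]
    unfolding dp_test_def by metis
  then have "symmetrize n \<phi> x \<le> symmetrize n (\<lambda>z. exp \<epsilon> * \<phi> z + \<delta>) x'"
    and "symmetrize n (\<lambda>z. 1 - \<phi> z) x \<le> symmetrize n (\<lambda>z. exp \<epsilon> * (1 - \<phi> z) + \<delta>) x'"
    by (auto intro: symmetrize_mono)
  then show "symmetrize n \<phi> x \<le> exp \<epsilon> * symmetrize n \<phi> x' + \<delta>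
      \<and> 1 - symmetrize n \<phi> x \<le> exp \<epsilon> * (1 - symmetrize n \<phi> x') + \<delta>"
    by (simp add: symmetrize_affine symmetrize_one_minus)
qed

lemma integrable_bounded_exchangeable:
  fixes \<phi> :: "(nat \<Rightarrow> 'a) \<Rightarrow> real"
  assumes "exchangeable M n \<mu>" and "\<phi> \<in> borel_measurable (prod_space M n)"
    and "\<And>x. x \<in> space (prod_space M n) \<Longrightarrow> \<bar>\<phi> x\<bar> \<le> B"
  shows "integrable \<mu> \<phi>"
proof -
  have sets: "sets \<mu> = sets (prod_space M n)" and "prob_space \<mu>"
    using assms(1) by (simp_all add: exchangeable_def)
  interpret prob_space \<mu> by fact
  show ?thesis
  proof (rule integrable_const_bound[where B=B])
    show "AE x in \<mu>. norm (\<phi> x) \<le> B"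
      using assms(3) sets_eq_imp_space_eq[OF sets] by (intro AE_I2) auto
    show "\<phi> \<in> borel_measurable \<mu>"
      using assms(2) sets by (simp cong: measurable_cong_sets)
  qed
qed

lemma integral_symmetrize_exchangeable:
  assumes "exchangeable M n \<mu>" and \<phi>: "\<phi> \<in> borel_measurable (prod_space M n)"
    and "integrable \<mu> \<phi>"
  shows "(\<integral>x. symmetrize n \<phi> x \<partial>\<mu>) = (\<integral>x. \<phi> x \<partial>\<mu>)"
proof -
  let ?P = "{\<pi>. \<pi> permutes {..<n}}"
  have permuted: "integrable \<mu> (\<lambda>x. \<phi> (permute_coords n \<pi> x))
      \<and> (\<integral>x. \<phi> (permute_coords n \<pi> x) \<partial>\<mu>) = (\<integral>x. \<phi> x \<partial>\<mu>)"
    if "\<pi> permutes {..<n}" for \<pi>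
  proof -
    have "sets \<mu> = sets (prod_space M n)"
      and invariant: "distr \<mu> (prod_space M n) (permute_coords n \<pi>) = \<mu>"
      using assms(1) that by (simp_all add: exchangeable_def)
    then have \<pi>: "permute_coords n \<pi> \<in> measurable \<mu> (prod_space M n)"
      using measurable_permute_coords[OF that] by (simp cong: measurable_cong_sets)
    show ?thesis
      using integrable_distr_eq[OF \<pi> \<phi>] integral_distr[OF \<pi> \<phi>] assms(3)
      by (simp add: invariant)
  qed
  have "(\<integral>x. symmetrize n \<phi> x \<partial>\<mu>) = 1 / fact n * (\<integral>x. (\<Sum>\<pi>\<in>?P. \<phi> (permute_coords n \<pi> x)) \<partial>\<mu>)"
    by (simp add: symmetrize_def)
  also have "\<dots> = 1 / fact n * (\<Sum>\<pi>\<in>?P. \<integral>x. \<phi> x \<partial>\<mu>)"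
    using permuted by (simp add: Bochner_Integration.integral_sum)
  also have "\<dots> = (\<integral>x. \<phi> x \<partial>\<mu>)"
    by (simp add: card_permutations_lessThan)
  finally show ?thesis .
qed

lemma empirical_eq_card: "empirical n x B = card {i \<in> {..<n}. x i \<in> B} / n"
proof -
  have "(\<Sum>i<n. indicator B (x i)) = (\<Sum>i\<in>{i \<in> {..<n}. x i \<in> B}. 1::real)"
    by (simp add: indicator_def sum.If_cases Int_def)
  then show ?thesis by (simp add: empirical_def)
qed

(* The type of a point a is {B \<in> sets M. a \<in> B}; two points have the same type iff no
   measurable set separates them. *)
lemma measurable_set_isolating_type:
  assumes "finite P" and "P \<subseteq> space M" and "a \<in> space M"
  shows "\<exists>B\<in>sets M. a \<in> B \<and> (\<forall>p\<in>P. p \<in> B \<longleftrightarrow> (\<forall>C\<in>sets M. p \<in> C \<longleftrightarrow> a \<in> C))"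
  using assms(1,2)
proof (induction P rule: finite_induct)
  case empty
  show ?case using assms(3) by (intro bexI[of _ "space M"]) auto
next
  case (insert q P)
  then obtain B where B: "B \<in> sets M" "a \<in> B"
    and B_iff: "\<forall>p\<in>P. p \<in> B \<longleftrightarrow> (\<forall>C\<in>sets M. p \<in> C \<longleftrightarrow> a \<in> C)"
    by auto
  show ?case
  proof (cases "\<forall>C\<in>sets M. q \<in> C \<longleftrightarrow> a \<in> C")
    case True
    then show ?thesis using B B_iff by (intro bexI[of _ B]) auto
  next
    case False
    then obtain D where D: "D \<in> sets M" "(q \<in> D) \<noteq> (a \<in> D)" by blast
    define E where "E = (if a \<in> D then D else space M - D)"
    have E: "E \<in> sets M" "a \<in> E" "q \<notin> E"
      using D insert.prems assms(3) by (auto simp: E_def)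
    have "p \<in> B \<inter> E \<longleftrightarrow> (\<forall>C\<in>sets M. p \<in> C \<longleftrightarrow> a \<in> C)" if "p \<in> insert q P" for p
      using that B B_iff E False by auto
    then show ?thesis using B E by (intro bexI[of _ "B \<inter> E"]) auto
  qed
qed

(* Counting the sample points of a given type uses a measurable set that isolates this type
   among the finitely many sample points. *)
lemma image_mset_types_eq_if_counts_eq:
  fixes x y :: "nat \<Rightarrow> 'a"
  assumes "x ` {..<n} \<subseteq> space M" and "y ` {..<n} \<subseteq> space M"
    and counts: "\<And>B. B \<in> sets M \<Longrightarrow> card {i \<in> {..<n}. x i \<in> B} = card {i \<in> {..<n}. y i \<in> B}"
  shows "image_mset (\<lambda>i. {B \<in> sets M. x i \<in> B}) (mset_set {..<n})
       = image_mset (\<lambda>i. {B \<in> sets M. y i \<in> B}) (mset_set {..<n})"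
proof (rule multiset_eqI)
  fix c
  let ?V = "x ` {..<n} \<union> y ` {..<n}"
  have "{i \<in> {..<n}. {B \<in> sets M. x i \<in> B} = c} = {i \<in> {..<n}. x i \<in> B}
      \<and> {i \<in> {..<n}. {B \<in> sets M. y i \<in> B} = c} = {i \<in> {..<n}. y i \<in> B}"
    if "B \<in> sets M" "\<forall>p\<in>?V. p \<in> B \<longleftrightarrow> {C \<in> sets M. p \<in> C} = c" for B
    using that by auto
  moreover have "\<exists>B\<in>sets M. \<forall>p\<in>?V. p \<in> B \<longleftrightarrow> {C \<in> sets M. p \<in> C} = c"
  proof (cases "\<exists>a\<in>?V. c = {C \<in> sets M. a \<in> C}")
    case True
    then obtain a where a: "a \<in> ?V" "c = {C \<in> sets M. a \<in> C}" by blast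
    then have "a \<in> space M" using assms(1,2) by blast
    then obtain B where "B \<in> sets M" "\<forall>p\<in>?V. p \<in> B \<longleftrightarrow> (\<forall>C\<in>sets M. p \<in> C \<longleftrightarrow> a \<in> C)"
      using measurable_set_isolating_type[of ?V M a] assms(1,2) by blast
    then show ?thesis unfolding a(2) by (intro bexI[of _ B]) blast+
  next
    case False
    then show ?thesis by (intro bexI[of _ "{}"]) auto
  qed
  ultimately show "count (image_mset (\<lambda>i. {B \<in> sets M. x i \<in> B}) (mset_set {..<n})) c
      = count (image_mset (\<lambda>i. {B \<in> sets M. y i \<in> B}) (mset_set {..<n})) c"
    using counts by (auto simp: count_image_mset_eq_card_vimage)
qed

lemma empirical_eq_imp_permutes:
  assumes "x \<in> space (prod_space M n)" and "y \<in> space (prod_space M n)"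
    and "\<forall>B\<in>sets M. empirical n x B = empirical n y B"
  obtains p where "p permutes {..<n}" and "\<forall>i<n. \<forall>B\<in>sets M. y i \<in> B \<longleftrightarrow> x (p i) \<in> B"
proof (cases "n = 0")
  case True
  then show ?thesis by (intro that[OF permutes_id]) simp
next
  case False
  have "y ` {..<n} \<subseteq> space M" "x ` {..<n} \<subseteq> space M"
    using assms(1,2) by (auto simp: prod_space_def space_PiM PiE_iff)
  moreover have "card {i \<in> {..<n}. y i \<in> B} = card {i \<in> {..<n}. x i \<in> B}"
    if "B \<in> sets M" for B
    using assms(3) that False by (simp add: empirical_eq_card)
  ultimately have "image_mset (\<lambda>i. {B \<in> sets M. y i \<in> B}) (mset_set {..<n})
      = image_mset (\<lambda>i. {B \<in> sets M. x i \<in> B}) (mset_set {..<n})"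
    by (rule image_mset_types_eq_if_counts_eq)
  then obtain p where p: "p permutes {..<n}"
    and types: "\<forall>i\<in>{..<n}. {B \<in> sets M. y i \<in> B} = {B \<in> sets M. x (p i) \<in> B}"
    by (rule image_mset_eq_implies_permutes[OF finite_lessThan])
  have "y i \<in> B \<longleftrightarrow> x (p i) \<in> B" if "i < n" "B \<in> sets M" for i B
  proof -
    have "{B \<in> sets M. y i \<in> B} = {B \<in> sets M. x (p i) \<in> B}"
      using types that(1) by blast
    then show ?thesis using that(2) by blast
  qed
  then show ?thesis using that[OF p] by blast
qed

(* The sets not separating z from w form a sigma-algebra containing every cylinder. *)
lemma sets_PiM_coordinatewise_indistinguishable:
  assumes "z \<in> space (PiM I (\<lambda>_. M))" and "w \<in> space (PiM I (\<lambda>_. M))"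
    and "\<And>i B. i \<in> I \<Longrightarrow> B \<in> sets M \<Longrightarrow> z i \<in> B \<longleftrightarrow> w i \<in> B"
    and "S \<in> sets (PiM I (\<lambda>_. M))"
  shows "z \<in> S \<longleftrightarrow> w \<in> S"
proof -
  have "S \<in> sigma_sets (\<Pi>\<^sub>E i\<in>I. space M)
      {{f \<in> \<Pi>\<^sub>E i\<in>I. space M. f i \<in> A} | i A. i \<in> I \<and> A \<in> sets M}"
    using assms(4) sets_PiM_single[of I "\<lambda>_. M"] by simp
  then show ?thesis
  proof induct
    case (Basic a)
    then show ?case using assms(1-3) by (auto simp: space_PiM)
  next
    case (Compl a)
    then show ?case using assms(1,2) by (auto simp: space_PiM)
  qed auto
qed

lemma measurable_coordinatewise_indistinguishable:
  fixes f :: "('i \<Rightarrow> 'a) \<Rightarrow> 'b::t1_space"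
  assumes "f \<in> borel_measurable (PiM I (\<lambda>_. M))"
    and "z \<in> space (PiM I (\<lambda>_. M))" and "w \<in> space (PiM I (\<lambda>_. M))"
    and "\<And>i B. i \<in> I \<Longrightarrow> B \<in> sets M \<Longrightarrow> z i \<in> B \<longleftrightarrow> w i \<in> B"
  shows "f z = f w"
proof -
  let ?S = "f -` {f z} \<inter> space (PiM I (\<lambda>_. M))"
  have "?S \<in> sets (PiM I (\<lambda>_. M))"
    using assms(1) by measurable
  moreover have "z \<in> ?S" using assms(2) by blast
  ultimately have "w \<in> ?S" using sets_PiM_coordinatewise_indistinguishable[OF assms(2-4)] by blast
  then show ?thesis by simp
qed

lemma symmetrize_eq_if_empirical_eq:
  assumes "\<phi> \<in> borel_measurable (prod_space M n)"
    and x: "x \<in> space (prod_space M n)" and y: "y \<in> space (prod_space M n)"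
    and "\<forall>B\<in>sets M. empirical n x B = empirical n y B"
  shows "symmetrize n \<phi> x = symmetrize n \<phi> y"
proof -
  obtain p where p: "p permutes {..<n}"
    and types: "\<forall>i<n. \<forall>B\<in>sets M. y i \<in> B \<longleftrightarrow> x (p i) \<in> B"
    using empirical_eq_imp_permutes[OF x y assms(4)] by blast
  have "symmetrize n \<phi> y = symmetrize n \<phi> (permute_coords n p x)"
  proof (rule measurable_coordinatewise_indistinguishable[where I="{..<n}" and M=M])
    show "symmetrize n \<phi> \<in> borel_measurable (PiM {..<n} (\<lambda>_. M))"
      using measurable_symmetrize[OF assms(1)] by (simp add: prod_space_def)
    show "y \<in> space (PiM {..<n} (\<lambda>_. M))"
      using y by (simp add: prod_space_def)
    show "permute_coords n p x \<in> space (PiM {..<n} (\<lambda>_. M))"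
      using permute_coords_in_space[OF p x] by (simp add: prod_space_def)
    show "y i \<in> B \<longleftrightarrow> permute_coords n p x i \<in> B" if "i \<in> {..<n}" and "B \<in> sets M" for i B
      using types that by (simp add: permute_coords_def)
  qed
  also have "\<dots> = symmetrize n \<phi> x"
    by (rule symmetrize_permute_coords[OF p])
  finally show ?thesis by simp
qed

theorem theorem1:
  fixes M :: "'a measure" and n :: nat and \<epsilon> \<delta> :: real
    and I :: "'i set" and \<mu> :: "'i \<Rightarrow> (nat \<Rightarrow> 'a) measure"
    and \<phi> :: "(nat \<Rightarrow> 'a) \<Rightarrow> real"
  assumes "\<epsilon> > 0" and "\<delta> \<ge> 0" and "n \<ge> 1"
    and "\<And>i. i \<in> I \<Longrightarrow> exchangeable M n (\<mu> i)"
    and "\<phi> \<in> borel_measurable (prod_space M n)"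
    and "\<And>x. x \<in> space (prod_space M n) \<Longrightarrow> 0 \<le> \<phi> x \<and> \<phi> x \<le> 1"
    and "dp_test M n \<epsilon> \<delta> \<phi>"
  shows "symmetrize n \<phi> \<in> borel_measurable (prod_space M n)
    \<and> (\<forall>x\<in>space (prod_space M n). 0 \<le> symmetrize n \<phi> x \<and> symmetrize n \<phi> x \<le> 1)
    \<and> dp_test M n \<epsilon> \<delta> (symmetrize n \<phi>)
    \<and> (\<forall>i\<in>I. (\<integral>x. symmetrize n \<phi> x \<partial>\<mu> i) = (\<integral>x. \<phi> x \<partial>\<mu> i))
    \<and> (\<forall>x\<in>space (prod_space M n). \<forall>y\<in>space (prod_space M n).
         (\<forall>B\<in>sets M. empirical n x B = empirical n y B) \<longrightarrow>
         symmetrize n \<phi> x = symmetrize n \<phi> y)"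
proof -
  have integrable: "integrable (\<mu> i) \<phi>" if "i \<in> I" for i
    using assms(6) by (intro integrable_bounded_exchangeable[OF assms(4)[OF that] assms(5), of 1]) auto
  show ?thesis
  proof (intro conjI ballI impI)
    show "symmetrize n \<phi> \<in> borel_measurable (prod_space M n)"
      using assms(5) by (rule measurable_symmetrize)
    show "0 \<le> symmetrize n \<phi> x" "symmetrize n \<phi> x \<le> 1" if "x \<in> space (prod_space M n)" for x
      using symmetrize_bounds[OF assms(6) that] by simp_all
    show "dp_test M n \<epsilon> \<delta> (symmetrize n \<phi>)"
      using assms(7) by (rule dp_test_symmetrize)
    show "(\<integral>x. symmetrize n \<phi> x \<partial>\<mu> i) = (\<integral>x. \<phi> x \<partial>\<mu> i)" if "i \<in> I" for i
      using assms(4)[OF that] assms(5) integrable[OF that] by (rule integral_symmetrize_exchangeable)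
    show "symmetrize n \<phi> x = symmetrize n \<phi> y"
      if "x \<in> space (prod_space M n)" "y \<in> space (prod_space M n)"
        and "\<forall>B\<in>sets M. empirical n x B = empirical n y B" for x y
      using assms(5) that by (rule symmetrize_eq_if_empirical_eq)
  qed
qed

end
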